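(* As formal power series in $x, y, z$, $$\sum_{p,q,k \ge 0} u((p,q),k)\, x^p y^q z^k \;=\; \frac{1}{1-(1+z)(x+y-xy)}.$$
   Context: Let $\mathbb{N} = \{0,1,2,\dots\}$. For $(p,q) \in \mathbb{N}^2$ and $n \in \mathbb{N}$, an unrestricted generalized jump path of length $n$ starting at $(p,q)$ is a sequence $(x_0, \dots, x_n)$ of points of $\mathbb{N}^2$ satisfying three conditions: - $x_0 = (p,q)$; - for every $i$, each coordinate of $x_{i+1}$ is at most the corresponding coordinate of $x_i$; - $x_{i+1} \ne x_i$ for every $i$. Let $u((p,q),n)$ denote the number of such paths. *)

theory Defs
  imports "HOL-Computational_Algebra.Formal_Power_Series"
begin

definition jump_paths :: "nat \<times> nat \<Rightarrow> nat \<Rightarrow> (nat \<times> nat) list set" where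
  "jump_paths s n = {xs. length xs = n + 1 \<and> xs ! 0 = s \<and>
     (\<forall>i<n. fst (xs ! (i+1)) \<le> fst (xs ! i) \<and> snd (xs ! (i+1)) \<le> snd (xs ! i)
            \<and> xs ! (i+1) \<noteq> xs ! i)}"

definition u :: "nat \<times> nat \<Rightarrow> nat \<Rightarrow> nat" where
  "u s n = card (jump_paths s n)"

(* Trivariate formal power series in x, y, z over int, encoded as
   ((int fps) fps) fps: outer variable z, middle variable y, inner variable x. *)
definition fX :: "int fps fps fps" where "fX = fps_const (fps_const fps_X)"
definition fY :: "int fps fps fps" where "fY = fps_const fps_X"
definition fZ :: "int fps fps fps" where "fZ = fps_X"

definition jump_gf :: "int fps fps fps" where
  "jump_gf = Abs_fps (\<lambda>k. Abs_fps (\<lambda>q. Abs_fps (\<lambda>p. int (u (p, q) k))))"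

end

theory Submission imports Defs begin

unbundle fps_syntax

text \<open>A jump path of length \<open>k + 1\<close> from \<open>s\<close> is a first jump to a point strictly
below \<open>s\<close> followed by a path of length \<open>k\<close>, so \<open>u (p, q) (k + 1)\<close> is the prefix sum of
\<open>u _ k\<close> over the box \<open>[0, p] \<times> [0, q]\<close> minus the corner term \<open>u (p, q) k\<close>.
Taking prefix sums in \<open>x\<close> and \<open>y\<close> is division by \<open>(1 - x)(1 - y) = 1 - w\<close> with
\<open>w = x + y - x y\<close>, so the layers \<open>G\<^sub>k\<close> of the generating function in \<open>z\<close> satisfy
\<open>G\<^sub>0 (1 - w) = 1\<close> and \<open>G\<^bsub>k+1\<^esub> (1 - w) = G\<^sub>k w\<close>; these say exactly that
\<open>G (1 - (1 + z) w) = 1\<close>.\<close>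

definition strictly_below :: "nat \<times> nat \<Rightarrow> (nat \<times> nat) set" where
  "strictly_below s = {t. fst t \<le> fst s \<and> snd t \<le> snd s \<and> t \<noteq> s}"

lemma strictly_below_eq: "strictly_below (p, q) = {..p} \<times> {..q} - {(p, q)}"
  by (auto simp: strictly_below_def)

lemma finite_strictly_below: "finite (strictly_below s)"
  by (cases s) (simp add: strictly_below_eq)

lemma jump_paths_0: "jump_paths s 0 = {[s]}"
  unfolding jump_paths_def by (auto simp: length_Suc_conv)

lemma jump_paths_Suc:
  "jump_paths s (Suc k) = (\<Union>t\<in>strictly_below s. (#) s ` jump_paths t k)"
proof (intro equalityI subsetI)
  fix xs assume "xs \<in> jump_paths s (Suc k)"
  then obtain ys where xs: "xs = s # ys" and "length ys = Suc k"
    and steps: "\<forall>i<Suc k. fst (xs ! (i+1)) \<le> fst (xs ! i) \<and> snd (xs ! (i+1)) \<le> snd (xs ! i)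
                  \<and> xs ! (i+1) \<noteq> xs ! i"
    unfolding jump_paths_def by (cases xs) auto
  then have "ys \<in> jump_paths (ys ! 0) k"
    unfolding jump_paths_def by auto
  moreover have "ys ! 0 \<in> strictly_below s"
    using steps[rule_format, of 0] by (auto simp: strictly_below_def xs)
  ultimately show "xs \<in> (\<Union>t\<in>strictly_below s. (#) s ` jump_paths t k)"
    using xs by blast
next
  fix xs assume "xs \<in> (\<Union>t\<in>strictly_below s. (#) s ` jump_paths t k)"
  then obtain t ys where t: "t \<in> strictly_below s" and ys: "ys \<in> jump_paths t k"
    and xs: "xs = s # ys" by blast
  have "fst (xs ! (i+1)) \<le> fst (xs ! i) \<and> snd (xs ! (i+1)) \<le> snd (xs ! i) \<and> xs ! (i+1) \<noteq> xs ! i"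
    if "i < Suc k" for i
    using that t ys by (cases i) (auto simp: xs strictly_below_def jump_paths_def)
  then show "xs \<in> jump_paths s (Suc k)"
    using ys by (simp add: xs jump_paths_def)
qed

lemma finite_jump_paths: "finite (jump_paths s k)"
  by (induction k arbitrary: s) (auto simp: jump_paths_0 jump_paths_Suc finite_strictly_below)

lemma u_0: "u s 0 = 1"
  by (simp add: u_def jump_paths_0)

lemma u_Suc: "u s (Suc k) = (\<Sum>t\<in>strictly_below s. u t k)"
proof -
  have "u s (Suc k) = (\<Sum>t\<in>strictly_below s. card ((#) s ` jump_paths t k))"
    unfolding u_def jump_paths_Suc
  proof (rule card_UN_disjoint)
    show "\<forall>t\<in>strictly_below s. \<forall>t'\<in>strictly_below s. t \<noteq> t' \<longrightarrow>
            (#) s ` jump_paths t k \<inter> (#) s ` jump_paths t' k = {}"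
      by (auto simp: jump_paths_def)
  qed (auto simp: finite_strictly_below finite_jump_paths)
  then show ?thesis
    by (simp add: u_def card_image)
qed

lemma u_Suc_eq_box_sum:
  "int (u (p, q) (Suc k)) = (\<Sum>j\<le>q. \<Sum>i\<le>p. int (u (i, j) k)) - int (u (p, q) k)"
proof -
  have "(\<Sum>j\<le>q. \<Sum>i\<le>p. int (u (i, j) k)) = (\<Sum>t\<in>{..p} \<times> {..q}. int (u t k))"
    by (subst sum.swap) (simp add: sum.cartesian_product)
  then show ?thesis
    by (simp add: u_Suc strictly_below_eq sum_diff1)
qed

definition fps_partial_sums :: "'a::comm_monoid_add fps \<Rightarrow> 'a fps" where
  "fps_partial_sums f = Abs_fps (\<lambda>n. \<Sum>i\<le>n. f $ i)"

lemma fps_partial_sums_mult_one_minus_X: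
  fixes f :: "'a::comm_ring_1 fps"
  shows "fps_partial_sums f * (1 - fps_X) = f"
proof (rule fps_ext)
  fix n
  show "(fps_partial_sums f * (1 - fps_X)) $ n = f $ n"
    by (cases n) (simp_all add: fps_partial_sums_def algebra_simps mult.commute[of _ fps_X])
qed

definition fps_partial_sums2 :: "'a::comm_monoid_add fps fps \<Rightarrow> 'a fps fps" where
  "fps_partial_sums2 H = fps_partial_sums (Abs_fps (\<lambda>j. fps_partial_sums (H $ j)))"

lemma fps_partial_sums2_nth:
  "fps_partial_sums2 H $ q $ p = (\<Sum>j\<le>q. \<Sum>i\<le>p. H $ j $ i)"
  by (simp add: fps_partial_sums2_def fps_partial_sums_def fps_sum_nth)

lemma fps_partial_sums2_mult:
  fixes H :: "'a::comm_ring_1 fps fps"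
  shows "fps_partial_sums2 H * ((1 - fps_const fps_X) * (1 - fps_X)) = H"
proof -
  have "fps_partial_sums2 H * ((1 - fps_const fps_X) * (1 - fps_X))
        = (fps_partial_sums (Abs_fps (\<lambda>j. fps_partial_sums (H $ j))) * (1 - fps_X))
          * fps_const (1 - fps_X)"
    by (simp add: fps_partial_sums2_def mult_ac flip: fps_const_1_eq_1 fps_const_sub)
  also have "\<dots> = Abs_fps (\<lambda>j. fps_partial_sums (H $ j) * (1 - fps_X))"
    by (rule fps_ext) (simp add: fps_partial_sums_mult_one_minus_X)
  also have "\<dots> = H"
    by (simp add: fps_partial_sums_mult_one_minus_X fps_nth_inverse)
  finally show ?thesis .
qed

definition jump_layer :: "nat \<Rightarrow> int fps fps" where
  "jump_layer k = Abs_fps (\<lambda>q. Abs_fps (\<lambda>p. int (u (p, q) k)))"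

lemma jump_gf_eq: "jump_gf = Abs_fps jump_layer"
  by (simp add: jump_gf_def jump_layer_def[abs_def])

lemma jump_layer_0: "jump_layer 0 = fps_partial_sums2 1"
  by (intro fps_ext) (simp add: jump_layer_def fps_partial_sums2_nth u_0 sum.atMost_shift)

lemma jump_layer_Suc: "jump_layer (Suc k) = fps_partial_sums2 (jump_layer k) - jump_layer k"
  by (intro fps_ext) (simp add: jump_layer_def fps_partial_sums2_nth u_Suc_eq_box_sum)

lemma jump_layer_0_mult: "jump_layer 0 * ((1 - fps_const fps_X) * (1 - fps_X)) = 1"
  by (simp add: jump_layer_0 fps_partial_sums2_mult)

lemma jump_layer_Suc_mult:
  "jump_layer (Suc k) * d = jump_layer k * (1 - d)"
  if "d = (1 - fps_const fps_X) * (1 - fps_X)"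
  by (simp add: jump_layer_Suc fps_partial_sums2_mult[where 'a=int, folded that]
      left_diff_distrib right_diff_distrib)

theorem mainTheorem5:
  shows "jump_gf * (1 - (1 + fZ) * (fX + fY - fX * fY)) = 1"
proof -
  define d :: "int fps fps" where "d = (1 - fps_const fps_X) * (1 - fps_X)"
  have "fX + fY - fX * fY = fps_const (fps_const fps_X + fps_X - fps_const fps_X * fps_X)"
    by (simp add: fX_def fY_def)
  also have "fps_const fps_X + fps_X - fps_const fps_X * fps_X = 1 - d"
    by (simp add: d_def algebra_simps)
  also have "fps_const (1 - d) = 1 - fps_const d"
    by (metis fps_const_1_eq_1 fps_const_sub)
  finally have weight: "fX + fY - fX * fY = 1 - fps_const d" .
  have "jump_gf * (1 - (1 + fZ) * (fX + fY - fX * fY))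
        = jump_gf * fps_const d - fps_X * (jump_gf * (1 - fps_const d))"
    unfolding weight by (simp add: fZ_def algebra_simps)
  also have "\<dots> = 1"
  proof (rule fps_ext)
    fix k
    show "(jump_gf * fps_const d - fps_X * (jump_gf * (1 - fps_const d))) $ k = 1 $ k"
      by (cases k) (simp_all add: jump_gf_eq jump_layer_0_mult[folded d_def]
          jump_layer_Suc_mult[OF d_def] right_diff_distrib)
  qed
  finally show ?thesis .
qed

end
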